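(* Let $G$ be a directed graph with vertices $s,t$ and $k\ge1$. For any $C_1,C_2\in L^*$ and any $e\in E(G)$, we have $B_e(C_1\vee C_2)+B_e(C_1\wedge C_2)\le B_e(C_1)+B_e(C_2)$, where $B_e(C)=\binom{\mu_e(C)}{2}$.
   Context: An $s$-$t$ cut of a directed graph $G$ is a set $X\subseteq E(G)$ such that removing $X$ leaves no directed $s$-$t$ path; $\Gamma_G(s,t)$ is the set of $s$-$t$ cuts of minimum cardinality. Fix a maximum-size collection $\mathcal P$ of pairwise edge-disjoint directed $s$-$t$ paths (each minimum $s$-$t$ cut contains exactly one edge of each path in $\mathcal P$). For $X,Y\in\Gamma_G(s,t)$, $S_{\min}(X\cup Y)$ (resp. $S_{\max}(X\cup Y)$) consists, for each $p\in\mathcal P$, of the edge of $(X\cup Y)\cap p$ occurring first (resp. last) along $p$. $X\le Y$ means every directed $s$-$t$ path meets an edge of $X$ at or before an edge of $Y$. $U^k_{\mathrm{lr}}$ is the set of $k$-tuples $[X_1,\dots,X_k]$ of elements of $\Gamma_G(s,t)$ with $X_i\le X_j$ for all $i<j$. $L^*$ is the lattice on $U^k_{\mathrm{lr}}$ with componentwise order, join $[X_i]_i\vee[Y_i]_i=[S_{\max}(X_i\cup Y_i)]_i$ and meet $[X_i]_i\wedge[Y_i]_i=[S_{\min}(X_i\cup Y_i)]_i$. For $C=[X_1,\dots,X_k]$, $\mu_e(C)$ is the number of indices $i$ with $e\in X_i$. *)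

theory Defs
  imports Main "Graph_Theory.Digraph" "Graph_Theory.Arc_Walk"
begin

text \<open>Directed s-t paths are the arc paths of the AFP Graph_Theory library
  (arc lists with distinct visited vertices).\<close>

definition st_cut :: "('a,'b) pre_digraph \<Rightarrow> 'a \<Rightarrow> 'a \<Rightarrow> 'b set \<Rightarrow> bool" where
  "st_cut G s t X \<longleftrightarrow> X \<subseteq> arcs G \<and>
     (\<forall>p. pre_digraph.apath G s p t \<longrightarrow> set p \<inter> X \<noteq> {})"

definition min_cuts :: "('a,'b) pre_digraph \<Rightarrow> 'a \<Rightarrow> 'a \<Rightarrow> 'b set set" where
  "min_cuts G s t = {X. st_cut G s t X \<and> (\<forall>Y. st_cut G s t Y \<longrightarrow> card X \<le> card Y)}"

definition max_disjoint_paths :: "('a,'b) pre_digraph \<Rightarrow> 'a \<Rightarrow> 'a \<Rightarrow> 'b list set \<Rightarrow> bool" where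
  "max_disjoint_paths G s t P \<longleftrightarrow>
     (let ok = (\<lambda>Q. finite Q \<and> (\<forall>p\<in>Q. pre_digraph.apath G s p t) \<and>
                    (\<forall>p\<in>Q. \<forall>q\<in>Q. p \<noteq> q \<longrightarrow> set p \<inter> set q = {}))
      in ok P \<and> (\<forall>Q. ok Q \<longrightarrow> card Q \<le> card P))"

definition S_min :: "'b list set \<Rightarrow> 'b set \<Rightarrow> 'b set" where
  "S_min P Z = {hd (filter (\<lambda>e. e \<in> Z) p) | p. p \<in> P}"

definition S_max :: "'b list set \<Rightarrow> 'b set \<Rightarrow> 'b set" where
  "S_max P Z = {last (filter (\<lambda>e. e \<in> Z) p) | p. p \<in> P}"

definition cut_le :: "('a,'b) pre_digraph \<Rightarrow> 'a \<Rightarrow> 'a \<Rightarrow> 'b set \<Rightarrow> 'b set \<Rightarrow> bool" where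
  "cut_le G s t X Y \<longleftrightarrow> (\<forall>p. pre_digraph.apath G s p t \<longrightarrow>
      (\<exists>i<length p. p ! i \<in> X \<and> (\<forall>j<i. p ! j \<notin> Y)))"

definition U_lr :: "('a,'b) pre_digraph \<Rightarrow> 'a \<Rightarrow> 'a \<Rightarrow> nat \<Rightarrow> 'b set list set" where
  "U_lr G s t k = {C. length C = k \<and> set C \<subseteq> min_cuts G s t \<and>
      (\<forall>i j. i < j \<and> j < k \<longrightarrow> cut_le G s t (C ! i) (C ! j))}"

definition L_join :: "'b list set \<Rightarrow> 'b set list \<Rightarrow> 'b set list \<Rightarrow> 'b set list" where
  "L_join P C D = map2 (\<lambda>X Y. S_max P (X \<union> Y)) C D"

definition L_meet :: "'b list set \<Rightarrow> 'b set list \<Rightarrow> 'b set list \<Rightarrow> 'b set list" where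
  "L_meet P C D = map2 (\<lambda>X Y. S_min P (X \<union> Y)) C D"

definition mu :: "'b \<Rightarrow> 'b set list \<Rightarrow> nat" where
  "mu e C = card {i. i < length C \<and> e \<in> C ! i}"

definition B :: "'b \<Rightarrow> 'b set list \<Rightarrow> nat" where
  "B e C = mu e C choose 2"

end

theory Submission
  imports Defs
begin

text \<open>A maximum family \<open>P\<close> of arc-disjoint s-t paths admits an s-t cut of size \<open>|P|\<close>:
  the arcs leaving the set of vertices reachable from s in the residual graph of \<open>P\<close>, which
  misses t because an augmenting path would yield \<open>|P| + 1\<close> disjoint paths. Hence every
  minimum cut meets each path of \<open>P\<close> in exactly one arc. Fix the path p through e and let
  \<open>x\<^sub>i\<close>, \<open>y\<^sub>i\<close> be the positions on p of the i-th cuts of \<open>C\<^sub>1\<close>, \<open>C\<^sub>2\<close>. Both are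
  monotone in i, and the i-th cuts of the join and the meet sit at positions \<open>max x\<^sub>i y\<^sub>i\<close> and
  \<open>min x\<^sub>i y\<^sub>i\<close>; so the four multiplicities of e are the sizes of the level sets of \<open>x\<close>, \<open>y\<close>,
  \<open>max x y\<close>, \<open>min x y\<close> at the position of e. By monotonicity the level sets of \<open>max x y\<close> and
  \<open>min x y\<close> each lie inside that of \<open>x\<close> or of \<open>y\<close>, while the four sizes have equal sums in
  pairs, and convexity of \<open>m \<mapsto> m choose 2\<close> gives the inequality.\<close>

section \<open>An exchange inequality for monotone sequences\<close>

lemma choose_two_add_le:
  fixes j m a b :: nat
  assumes sum: "j + m = a + b" and "j \<le> max a b" and "m \<le> max a b"
  shows "(j choose 2) + (m choose 2) \<le> (a choose 2) + (b choose 2)"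
proof -
  have double: "2 * int (n choose 2) = int n * int n - int n" for n :: nat
    by (induction n) (simp_all add: numeral_2_eq_2 algebra_simps)
  have m: "int m = int a + int b - int j"
    using sum by linarith
  have "0 \<le> (int j - int a) * (int b - int j)"
    using assms by (cases "a \<le> b") (auto intro: mult_nonneg_nonneg mult_nonpos_nonpos)
  also have "\<dots> = int j * int m - int a * int b"
    unfolding m by (simp add: algebra_simps)
  finally have "int (2 * ((j choose 2) + (m choose 2))) \<le> int (2 * ((a choose 2) + (b choose 2)))"
    using double[of j] double[of m] double[of a] double[of b] unfolding m
    by (simp add: algebra_simps)
  then show ?thesis
    by simp
qed

lemma max_level_set_subset_level_set:
  fixes x y :: "'i::linorder \<Rightarrow> 'a::linorder"
  assumes x: "mono_on I x" and y: "mono_on I y"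
  shows "{i\<in>I. max (x i) (y i) = c} \<subseteq> {i\<in>I. x i = c} \<or>
         {i\<in>I. max (x i) (y i) = c} \<subseteq> {i\<in>I. y i = c}"
proof (rule ccontr)
  assume "\<not> ?thesis"
  then obtain i i' where "i \<in> I" "max (x i) (y i) = c" "x i \<noteq> c"
    and "i' \<in> I" "max (x i') (y i') = c" "y i' \<noteq> c"
    by blast
  then have i: "i \<in> I" "x i < c" "y i = c" and i': "i' \<in> I" "y i' < c" "x i' = c"
    by (auto simp: max_def split: if_splits)
  show False
  proof (cases rule: le_cases[of i i'])
    case le
    then show False using mono_onD[OF y i(1) i'(1)] i i' by simp
  next
    case ge
    then show False using mono_onD[OF x i'(1) i(1)] i i' by simp
  qed
qed

lemma min_level_set_subset_level_set:
  fixes x y :: "'i::linorder \<Rightarrow> 'a::linorder"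
  assumes x: "mono_on I x" and y: "mono_on I y"
  shows "{i\<in>I. min (x i) (y i) = c} \<subseteq> {i\<in>I. x i = c} \<or>
         {i\<in>I. min (x i) (y i) = c} \<subseteq> {i\<in>I. y i = c}"
proof (rule ccontr)
  assume "\<not> ?thesis"
  then obtain i i' where "i \<in> I" "min (x i) (y i) = c" "x i \<noteq> c"
    and "i' \<in> I" "min (x i') (y i') = c" "y i' \<noteq> c"
    by blast
  then have i: "i \<in> I" "x i > c" "y i = c" and i': "i' \<in> I" "y i' > c" "x i' = c"
    by (auto simp: min_def split: if_splits)
  show False
  proof (cases rule: le_cases[of i i'])
    case le
    then show False using mono_onD[OF x i(1) i'(1)] i i' by simp
  next
    case ge
    then show False using mono_onD[OF y i'(1) i(1)] i i' by simp
  qed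
qed

lemma card_max_level_set_add_card_min_level_set:
  fixes x y :: "'i \<Rightarrow> 'a::linorder"
  assumes "finite I"
  shows "card {i\<in>I. max (x i) (y i) = c} + card {i\<in>I. min (x i) (y i) = c} =
         card {i\<in>I. x i = c} + card {i\<in>I. y i = c}"
proof -
  have "{i\<in>I. max (x i) (y i) = c} \<union> {i\<in>I. min (x i) (y i) = c} = {i\<in>I. x i = c} \<union> {i\<in>I. y i = c}"
    and "{i\<in>I. max (x i) (y i) = c} \<inter> {i\<in>I. min (x i) (y i) = c} = {i\<in>I. x i = c} \<inter> {i\<in>I. y i = c}"
    by (auto simp: max_def min_def)
  then show ?thesis
    using card_Un_Int[of "{i\<in>I. max (x i) (y i) = c}" "{i\<in>I. min (x i) (y i) = c}"]
      card_Un_Int[of "{i\<in>I. x i = c}" "{i\<in>I. y i = c}"] assms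
    by simp
qed

lemma choose_two_max_min_level_sets_le:
  fixes x y :: "'i::linorder \<Rightarrow> 'a::linorder"
  assumes "finite I" and "mono_on I x" and "mono_on I y"
  shows "(card {i\<in>I. max (x i) (y i) = c} choose 2) + (card {i\<in>I. min (x i) (y i) = c} choose 2) \<le>
         (card {i\<in>I. x i = c} choose 2) + (card {i\<in>I. y i = c} choose 2)"
proof (rule choose_two_add_le)
  show "card {i\<in>I. max (x i) (y i) = c} + card {i\<in>I. min (x i) (y i) = c} =
        card {i\<in>I. x i = c} + card {i\<in>I. y i = c}"
    using assms(1) by (rule card_max_level_set_add_card_min_level_set)
  have fin: "finite {i\<in>I. x i = c}" "finite {i\<in>I. y i = c}"
    using assms(1) by simp_all
  show "card {i\<in>I. max (x i) (y i) = c} \<le> max (card {i\<in>I. x i = c}) (card {i\<in>I. y i = c})"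
    using max_level_set_subset_level_set[OF assms(2,3)] card_mono[OF fin(1)] card_mono[OF fin(2)]
    by (meson le_max_iff_disj)
  show "card {i\<in>I. min (x i) (y i) = c} \<le> max (card {i\<in>I. x i = c}) (card {i\<in>I. y i = c})"
    using min_level_set_subset_level_set[OF assms(2,3)] card_mono[OF fin(1)] card_mono[OF fin(2)]
    by (meson le_max_iff_disj)
qed


section \<open>Net outflow and flow decomposition\<close>

definition st_excess :: "'a \<Rightarrow> 'a \<Rightarrow> 'a \<Rightarrow> int" where
  "st_excess s t v = of_bool (v = s) - of_bool (v = t)"

definition net_out :: "('a,'b) pre_digraph \<Rightarrow> 'b set \<Rightarrow> 'a \<Rightarrow> int" where
  "net_out G A v = (\<Sum>a\<in>A. of_bool (tail G a = v) - of_bool (head G a = v))"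

lemma net_out_Diff:
  "finite A \<Longrightarrow> A' \<subseteq> A \<Longrightarrow> net_out G (A - A') v = net_out G A v - net_out G A' v"
  unfolding net_out_def by (rule sum_diff)

lemma net_out_Un_disjoint:
  "finite A \<Longrightarrow> finite A' \<Longrightarrow> A \<inter> A' = {} \<Longrightarrow>
    net_out G (A \<union> A') v = net_out G A v + net_out G A' v"
  unfolding net_out_def by (rule sum.union_disjoint)

definition disjoint_st_paths :: "('a,'b) pre_digraph \<Rightarrow> 'a \<Rightarrow> 'a \<Rightarrow> 'b list set \<Rightarrow> bool" where
  "disjoint_st_paths G s t Q \<longleftrightarrow> finite Q \<and> (\<forall>p\<in>Q. pre_digraph.apath G s p t) \<and>
     (\<forall>p\<in>Q. \<forall>q\<in>Q. p \<noteq> q \<longrightarrow> set p \<inter> set q = {})"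

lemma max_disjoint_paths_iff:
  "max_disjoint_paths G s t P \<longleftrightarrow>
     disjoint_st_paths G s t P \<and> (\<forall>Q. disjoint_st_paths G s t Q \<longrightarrow> card Q \<le> card P)"
  unfolding max_disjoint_paths_def disjoint_st_paths_def Let_def by simp

context wf_digraph
begin

lemma net_out_trail: "trail u p w \<Longrightarrow> net_out G (set p) v = st_excess u w v"
proof (induction p arbitrary: u)
  case Nil
  then show ?case by (simp add: net_out_def st_excess_def trail_Nil_iff)
next
  case (Cons a p)
  then have "u = tail G a" "trail (head G a) p w" "a \<notin> set p"
    by (simp_all add: trail_Cons_iff)
  then show ?case
    using Cons.IH by (simp add: net_out_def st_excess_def)
qed

lemma apath_imp_trail: "apath u p w \<Longrightarrow> trail u p w"
  by (auto simp: apath_def trail_def intro: distinct_verts_imp_distinct)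

lemma awalk_crosses_boundary:
  assumes "awalk u p w" and "u \<in> R" and "w \<notin> R"
  shows "\<exists>a\<in>set p. tail G a \<in> R \<and> head G a \<notin> R"
  using assms
proof (induction p arbitrary: u)
  case Nil
  then show ?case by (simp add: awalk_Nil_iff)
next
  case (Cons a p)
  then show ?case
    by (cases "head G a \<in> R") (auto simp: awalk_Cons_iff)
qed

context
  fixes F :: "'b set" and R :: "'a set"
  assumes backward_closed: "\<And>a. a \<in> F \<Longrightarrow> head G a \<in> R \<Longrightarrow> tail G a \<in> R"
begin

lemma awalk_stays_outside:
  "awalk u p w \<Longrightarrow> u \<notin> R \<Longrightarrow> set p \<subseteq> F \<Longrightarrow> \<forall>a\<in>set p. tail G a \<notin> R"
proof (induction p arbitrary: u)
  case (Cons a p)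
  then show ?case
    using backward_closed by (auto simp: awalk_Cons_iff)
qed simp

lemma card_awalk_boundary_le_1:
  assumes "awalk u p w" and "set p \<subseteq> F"
  shows "card (set p \<inter> {a. tail G a \<in> R \<and> head G a \<notin> R}) \<le> 1"
  using assms
proof (induction p arbitrary: u)
  case (Cons a p)
  then have a: "u = tail G a" "awalk (head G a) p w" "a \<in> F" "set p \<subseteq> F"
    by (auto simp: awalk_Cons_iff)
  show ?case
  proof (cases "head G a \<in> R")
    case True
    then show ?thesis using Cons.IH[OF a(2,4)] by (simp add: Int_insert_left)
  next
    case False
    then have "set (a # p) \<inter> {a. tail G a \<in> R \<and> head G a \<notin> R} \<subseteq> {a}"
      using awalk_stays_outside[OF a(2) False a(4)] by auto
    then show ?thesis
      using card_mono[of "{a}"] by fastforce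
  qed
qed simp

end

end

context fin_digraph
begin

lemma awalk_within_of_net_out:
  assumes A: "A \<subseteq> arcs G" and s: "s \<in> verts G" and "m > 0"
    and net: "\<And>v. net_out G A v = int m * st_excess s t v"
  shows "\<exists>p. awalk s p t \<and> set p \<subseteq> A"
proof (rule ccontr)
  assume no_walk: "\<not> ?thesis"
  define W where "W = {v. \<exists>p. awalk s p v \<and> set p \<subseteq> A}"
  have "t \<notin> W" using no_walk unfolding W_def by blast
  moreover have "s \<in> W" unfolding W_def using s by (auto simp: awalk_Nil_iff intro!: exI[of _ "[]"])
  moreover have fin_W: "finite W"
    using finite_verts by (rule finite_subset[rotated]) (auto simp: W_def awalk_last_in_verts)
  ultimately have "int m = (\<Sum>v\<in>W. net_out G A v)"
    by (simp add: net sum_distrib_left[symmetric] st_excess_def sum_subtractf)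
  also have "\<dots> = (\<Sum>a\<in>A. of_bool (tail G a \<in> W) - of_bool (head G a \<in> W))"
    unfolding net_out_def using fin_W by (subst sum.swap) (simp add: sum_subtractf of_bool_def sum.delta')
  also have "\<dots> \<le> 0"
  proof (rule sum_nonpos)
    fix a assume "a \<in> A"
    show "of_bool (tail G a \<in> W) - of_bool (head G a \<in> W) \<le> (0::int)"
    proof (cases "tail G a \<in> W")
      case True
      then obtain p where "awalk s p (tail G a)" "set p \<subseteq> A" unfolding W_def by blast
      then have "awalk s (p @ [a]) (head G a)" "set (p @ [a]) \<subseteq> A"
        using \<open>a \<in> A\<close> A by (auto intro: awalk_appendI arc_implies_awalk)
      then have "head G a \<in> W" unfolding W_def by blast
      then show ?thesis by simp
    qed simp
  qed
  finally show False using \<open>m > 0\<close> by simp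
qed

lemma disjoint_st_paths_of_net_out:
  assumes "A \<subseteq> arcs G" and s: "s \<in> verts G" and "s \<noteq> t"
    and "\<And>v. net_out G A v = int m * st_excess s t v"
  shows "\<exists>Q. disjoint_st_paths G s t Q \<and> card Q = m \<and> (\<forall>p\<in>Q. set p \<subseteq> A)"
  using assms(1,4)
proof (induction m arbitrary: A)
  case 0
  then show ?case by (auto simp: disjoint_st_paths_def intro!: exI[of _ "{}"])
next
  case (Suc m)
  obtain p where p: "awalk s p t" "set p \<subseteq> A"
    using awalk_within_of_net_out[OF Suc.prems(1) s _ Suc.prems(2)] by auto
  define q where "q = awalk_to_apath p"
  have q: "apath s q t" "set q \<subseteq> A"
    using apath_awalk_to_apath[OF p(1)] awalk_to_apath_subset[OF p(1)] p(2) unfolding q_def by auto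
  have "net_out G (A - set q) v = int m * st_excess s t v" for v
    using Suc.prems net_out_Diff[of A "set q" G v] net_out_trail[OF apath_imp_trail[OF q(1)]] q(2)
      finite_subset[OF _ finite_arcs]
    by (simp add: algebra_simps)
  then obtain Q where Q: "disjoint_st_paths G s t Q" "card Q = m" "\<forall>p\<in>Q. set p \<subseteq> A - set q"
    using Suc.IH[of "A - set q"] Suc.prems(1) by blast
  have "q \<noteq> []" using q(1) \<open>s \<noteq> t\<close> by (auto simp: apath_Nil_iff)
  then have "q \<notin> Q" using Q(3) by (cases q) auto
  then have "disjoint_st_paths G s t (insert q Q) \<and> card (insert q Q) = Suc m"
    using Q q(1) by (auto simp: disjoint_st_paths_def)
  then show ?case using Q(3) q(2) by blast
qed

end

definition residual :: "('a,'b) pre_digraph \<Rightarrow> 'b set \<Rightarrow> ('a, 'b \<times> bool) pre_digraph" where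
  "residual G F = \<lparr> verts = verts G,
     arcs = (\<lambda>a. (a, True)) ` (arcs G - F) \<union> (\<lambda>a. (a, False)) ` F,
     tail = (\<lambda>(a, fwd). if fwd then tail G a else head G a),
     head = (\<lambda>(a, fwd). if fwd then head G a else tail G a) \<rparr>"

lemma wf_digraph_residual: "wf_digraph G \<Longrightarrow> F \<subseteq> arcs G \<Longrightarrow> wf_digraph (residual G F)"
  unfolding wf_digraph_def residual_def by auto

lemma net_out_residual:
  assumes "finite S"
  shows "net_out (residual G F) S v = net_out G {a. (a, True) \<in> S} v - net_out G {a. (a, False) \<in> S} v"
proof -
  have S: "S = (\<lambda>a. (a, True)) ` {a. (a, True) \<in> S} \<union> (\<lambda>a. (a, False)) ` {a. (a, False) \<in> S}"
  proof (intro set_eqI iffI)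
    fix x assume "x \<in> S"
    moreover obtain a fwd where "x = (a, fwd)" by fastforce
    ultimately show "x \<in> (\<lambda>a. (a, True)) ` {a. (a, True) \<in> S} \<union> (\<lambda>a. (a, False)) ` {a. (a, False) \<in> S}"
      by (cases fwd) auto
  qed auto
  have fin: "finite {a. (a, fwd) \<in> S}" for fwd
    using finite_vimageI[OF assms, of "\<lambda>a. (a, fwd)"] by (simp add: vimage_def inj_on_def)
  have "net_out (residual G F) S v =
      net_out (residual G F) ((\<lambda>a. (a, True)) ` {a. (a, True) \<in> S}) v +
      net_out (residual G F) ((\<lambda>a. (a, False)) ` {a. (a, False) \<in> S}) v"
    by (subst S, rule net_out_Un_disjoint) (use fin in auto)
  also have "\<dots> = net_out G {a. (a, True) \<in> S} v - net_out G {a. (a, False) \<in> S} v"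
    by (simp add: net_out_def residual_def sum.reindex inj_on_def sum_subtractf)
  finally show ?thesis .
qed


section \<open>Minimum cuts meet each path of a maximum family once\<close>

lemma (in wf_digraph) no_st_cut_self:
  assumes "s \<in> verts G"
  shows "\<not> st_cut G s s X"
proof -
  have "apath s [] s"
    using assms by (simp add: apath_Nil_iff)
  then show ?thesis
    by (auto simp: st_cut_def)
qed

locale st_max_paths = fin_digraph G for G :: "('a,'b) pre_digraph" +
  fixes s t :: 'a and P :: "'b list set"
  assumes s_in_verts: "s \<in> verts G" and s_neq_t: "s \<noteq> t"
    and max_paths: "max_disjoint_paths G s t P"
begin

lemma finite_P: "finite P"
  and apath_P: "p \<in> P \<Longrightarrow> apath s p t"
  and disjoint_P: "p \<in> P \<Longrightarrow> q \<in> P \<Longrightarrow> p \<noteq> q \<Longrightarrow> set p \<inter> set q = {}"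
  and card_le_card_P: "disjoint_st_paths G s t Q \<Longrightarrow> card Q \<le> card P"
  using max_paths by (auto simp: max_disjoint_paths_iff disjoint_st_paths_def)

definition path_arcs :: "'b set" where
  "path_arcs = \<Union>(set ` P)"

lemma path_arcs_subset: "path_arcs \<subseteq> arcs G"
  using apath_P by (force simp: path_arcs_def apath_def awalk_def)

lemma net_out_path_arcs: "net_out G path_arcs v = int (card P) * st_excess s t v"
proof -
  have "net_out G path_arcs v = (\<Sum>p\<in>P. net_out G (set p) v)"
    unfolding path_arcs_def net_out_def by (rule sum.UNION_disjoint) (use finite_P disjoint_P in auto)
  then show ?thesis
    by (simp add: net_out_trail[OF apath_imp_trail[OF apath_P]])
qed

sublocale residual: wf_digraph "residual G path_arcs"
  by (rule wf_digraph_residual[OF wf_digraph path_arcs_subset])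

lemma no_augmenting_path: "\<not> residual.awalk s q t"
proof
  assume "residual.awalk s q t"
  then have q: "residual.trail s (residual.awalk_to_apath q) t" (is "residual.trail s ?q t")
    by (intro residual.apath_imp_trail residual.apath_awalk_to_apath)
  define Fw where "Fw = {a. (a, True) \<in> set ?q}"
  define Bk where "Bk = {a. (a, False) \<in> set ?q}"
  have "set ?q \<subseteq> arcs (residual G path_arcs)"
    using q by (auto simp: residual.trail_def)
  then have Fw: "Fw \<subseteq> arcs G - path_arcs" and Bk: "Bk \<subseteq> path_arcs"
    by (auto simp: Fw_def Bk_def residual_def)
  have augment: "net_out G Fw v - net_out G Bk v = st_excess s t v" for v
    using net_out_residual[of "set ?q" G path_arcs v] residual.net_out_trail[OF q]
    by (simp add: Fw_def Bk_def)
  have fin: "finite Fw" "finite path_arcs"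
    using Fw path_arcs_subset by (auto intro: finite_subset[OF _ finite_arcs])
  \<comment> \<open>Trading the arcs of \<open>P\<close> that the augmenting path uses backwards for its forward arcs
    carries one more unit of flow.\<close>
  have "net_out G ((path_arcs - Bk) \<union> Fw) v = int (Suc (card P)) * st_excess s t v" for v
  proof -
    have "net_out G ((path_arcs - Bk) \<union> Fw) v = net_out G (path_arcs - Bk) v + net_out G Fw v"
      by (rule net_out_Un_disjoint) (use fin Fw in auto)
    also have "\<dots> = net_out G path_arcs v - net_out G Bk v + net_out G Fw v"
      by (simp add: net_out_Diff[OF fin(2) Bk])
    finally show ?thesis
      using augment[of v] net_out_path_arcs[of v] by (simp add: algebra_simps)
  qed
  moreover have "(path_arcs - Bk) \<union> Fw \<subseteq> arcs G"
    using Fw path_arcs_subset by blast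
  ultimately obtain Q where "disjoint_st_paths G s t Q" "card Q = Suc (card P)"
    using disjoint_st_paths_of_net_out s_in_verts s_neq_t by blast
  then show False
    using card_le_card_P by fastforce
qed

definition residual_reach :: "'a set" where
  "residual_reach = {v. \<exists>q. residual.awalk s q v}"

lemma s_in_residual_reach: "s \<in> residual_reach"
proof -
  have "residual.awalk s [] s"
    unfolding residual.awalk_Nil_iff using s_in_verts by (simp add: residual_def)
  then show ?thesis unfolding residual_reach_def by blast
qed

lemma t_notin_residual_reach: "t \<notin> residual_reach"
  using no_augmenting_path by (auto simp: residual_reach_def)

lemma head_in_residual_reach:
  assumes "x \<in> arcs (residual G path_arcs)" and "tail (residual G path_arcs) x \<in> residual_reach"
  shows "head (residual G path_arcs) x \<in> residual_reach"
proof -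
  obtain q where "residual.awalk s q (tail (residual G path_arcs) x)"
    using assms(2) by (auto simp: residual_reach_def)
  then have "residual.awalk s (q @ [x]) (head (residual G path_arcs) x)"
    using assms(1) by (auto intro: residual.awalk_appendI residual.arc_implies_awalk)
  then show ?thesis unfolding residual_reach_def by blast
qed

lemma forward_closed_residual_reach:
  assumes "a \<in> arcs G" "a \<notin> path_arcs" "tail G a \<in> residual_reach"
  shows "head G a \<in> residual_reach"
  using head_in_residual_reach[of "(a, True)"] assms by (simp add: residual_def)

lemma backward_closed_residual_reach:
  assumes "a \<in> path_arcs" "head G a \<in> residual_reach"
  shows "tail G a \<in> residual_reach"
  using head_in_residual_reach[of "(a, False)"] assms by (simp add: residual_def)

lemma exists_st_cut_card_le: "\<exists>D. st_cut G s t D \<and> card D \<le> card P"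
proof (intro exI conjI)
  define D where "D = {a \<in> arcs G. tail G a \<in> residual_reach \<and> head G a \<notin> residual_reach}"
  show "st_cut G s t D"
    unfolding st_cut_def
  proof (intro conjI allI impI)
    fix p assume "apath s p t"
    then show "set p \<inter> D \<noteq> {}"
      using awalk_crosses_boundary[of s p t residual_reach] s_in_residual_reach t_notin_residual_reach
      by (force simp: apath_def D_def awalk_def)
  qed (auto simp: D_def)
  have "D \<subseteq> path_arcs"
    using forward_closed_residual_reach by (auto simp: D_def)
  then have "card D = (\<Sum>p\<in>P. card (set p \<inter> D))"
    unfolding path_arcs_def
    by (subst card_UN_disjoint[symmetric]) (use finite_P disjoint_P in \<open>auto intro: arg_cong[where f = card]\<close>)
  also have "\<dots> \<le> (\<Sum>p\<in>P. 1)"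
  proof (rule sum_mono)
    fix p assume "p \<in> P"
    then have "card (set p \<inter> D) \<le>
        card (set p \<inter> {a. tail G a \<in> residual_reach \<and> head G a \<notin> residual_reach})"
      by (intro card_mono) (auto simp: D_def)
    also have "\<dots> \<le> 1"
      using card_awalk_boundary_le_1[of path_arcs residual_reach, OF backward_closed_residual_reach]
        apath_P[OF \<open>p \<in> P\<close>] \<open>p \<in> P\<close>
      by (auto simp: apath_def path_arcs_def)
    finally show "card (set p \<inter> D) \<le> 1" .
  qed
  finally show "card D \<le> card P" by simp
qed

lemma card_path_inter_min_cut:
  assumes X: "X \<in> min_cuts G s t" and p: "p \<in> P"
  shows "card (set p \<inter> X) = 1"
proof -
  have cut: "st_cut G s t X" and min: "\<And>D. st_cut G s t D \<Longrightarrow> card X \<le> card D"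
    using X by (auto simp: min_cuts_def)
  have "finite X"
    using cut finite_subset[OF _ finite_arcs] by (auto simp: st_cut_def)
  have hit: "1 \<le> card (set q \<inter> X)" if "q \<in> P" for q
    using cut apath_P[OF that] \<open>finite X\<close> by (auto simp: st_cut_def Suc_le_eq card_gt_0_iff)
  have "(\<Sum>q\<in>P. card (set q \<inter> X)) = card (\<Union>q\<in>P. set q \<inter> X)"
    by (rule card_UN_disjoint[symmetric]) (use finite_P disjoint_P \<open>finite X\<close> in auto)
  also have "\<dots> \<le> card X"
    using \<open>finite X\<close> by (intro card_mono) auto
  also have "\<dots> \<le> card P"
    using exists_st_cut_card_le min by fastforce
  finally have "(\<Sum>q\<in>P. 1) = (\<Sum>q\<in>P. card (set q \<inter> X))"
    using sum_mono[of P "\<lambda>_. 1" "\<lambda>q. card (set q \<inter> X)", OF hit] by simp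
  from sum_mono_inv[OF this hit p finite_P] show ?thesis
    by simp
qed

end


section \<open>Positions of minimum cuts along the paths\<close>

lemma distinct_card_inter_eq_1_ex1_nth:
  assumes "distinct xs" and "card (set xs \<inter> X) = 1"
  shows "\<exists>!j. j < length xs \<and> xs ! j \<in> X"
proof -
  obtain x where x: "set xs \<inter> X = {x}"
    using assms(2) card_1_singletonE by blast
  then obtain j where "j < length xs" "xs ! j = x"
    by (metis IntD1 in_set_conv_nth insertI1)
  show ?thesis
  proof (rule ex1I[of _ j])
    show "j < length xs \<and> xs ! j \<in> X"
      using \<open>j < length xs\<close> \<open>xs ! j = x\<close> x by blast
    fix i assume "i < length xs \<and> xs ! i \<in> X"
    then have "xs ! i = xs ! j"
      using \<open>xs ! j = x\<close> x nth_mem by blast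
    then show "i = j"
      using \<open>i < length xs \<and> xs ! i \<in> X\<close> \<open>j < length xs\<close> assms(1) by (simp add: nth_eq_iff_index_eq)
  qed
qed

lemma hd_filter_eq_nth:
  assumes "j < length xs" and "Q (xs ! j)" and "\<And>i. i < j \<Longrightarrow> \<not> Q (xs ! i)"
  shows "hd (filter Q xs) = xs ! j"
proof -
  have "filter Q (take j xs) = []"
    using assms(3) by (auto simp: filter_empty_conv in_set_conv_nth)
  then show ?thesis
    using assms(2) by (subst id_take_nth_drop[OF assms(1)]) simp
qed

lemma last_filter_eq_nth:
  assumes "j < length xs" and "Q (xs ! j)" and "\<And>i. j < i \<Longrightarrow> i < length xs \<Longrightarrow> \<not> Q (xs ! i)"
  shows "last (filter Q xs) = xs ! j"
proof -
  have "filter Q (drop (Suc j) xs) = []"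
    using assms(3) by (auto simp: filter_empty_conv in_set_conv_nth)
  then show ?thesis
    using assms(2) by (subst id_take_nth_drop[OF assms(1)]) simp
qed

lemma U_lr_nth_in_min_cuts: "C \<in> U_lr G s t k \<Longrightarrow> i < k \<Longrightarrow> C ! i \<in> min_cuts G s t"
  by (auto simp: U_lr_def)

text \<open>Meaningful only if \<open>X\<close> meets \<open>p\<close> in exactly one position, as minimum cuts do.\<close>

definition cut_pos :: "'b list \<Rightarrow> 'b set \<Rightarrow> nat" where
  "cut_pos p X = (THE j. j < length p \<and> p ! j \<in> X)"

lemma mu_L_join:
  "length C = k \<Longrightarrow> length D = k \<Longrightarrow>
    mu e (L_join P C D) = card {i\<in>{..<k}. e \<in> S_max P (C ! i \<union> D ! i)}"
  unfolding mu_def L_join_def by (intro arg_cong[where f = card]) auto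

lemma mu_L_meet:
  "length C = k \<Longrightarrow> length D = k \<Longrightarrow>
    mu e (L_meet P C D) = card {i\<in>{..<k}. e \<in> S_min P (C ! i \<union> D ! i)}"
  unfolding mu_def L_meet_def by (intro arg_cong[where f = card]) auto

context st_max_paths
begin

lemma distinct_P: "p \<in> P \<Longrightarrow> distinct p"
  using apath_imp_trail[OF apath_P] by (simp add: trail_def)

lemma nth_P_eq_nth_P_iff:
  assumes "p \<in> P" "q \<in> P" "i < length p" "j < length q"
  shows "p ! i = q ! j \<longleftrightarrow> p = q \<and> i = j"
proof (cases "p = q")
  case True
  then show ?thesis using distinct_P[OF assms(1)] assms(3,4) by (simp add: nth_eq_iff_index_eq)
next
  case False
  then show ?thesis using disjoint_P[OF assms(1,2) False] nth_mem[OF assms(3)] nth_mem[OF assms(4)] by auto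
qed

lemma nth_in_nth_P_image_iff:
  assumes f: "\<And>q. q \<in> P \<Longrightarrow> f q < length q" and p: "p \<in> P" and n: "n < length p"
  shows "p ! n \<in> {q ! f q | q. q \<in> P} \<longleftrightarrow> f p = n"
proof
  assume "p ! n \<in> {q ! f q | q. q \<in> P}"
  then obtain q where "q \<in> P" "p ! n = q ! f q"
    by blast
  then show "f p = n"
    using nth_P_eq_nth_P_iff[OF p _ n f] by auto
qed (use p in blast)

lemma
  assumes "X \<in> min_cuts G s t" and "p \<in> P"
  shows cut_pos_less_length: "cut_pos p X < length p"
    and nth_in_min_cut_iff: "j < length p \<Longrightarrow> p ! j \<in> X \<longleftrightarrow> j = cut_pos p X"
proof -
  have ex1: "\<exists>!j. j < length p \<and> p ! j \<in> X"
    using distinct_card_inter_eq_1_ex1_nth[OF distinct_P[OF assms(2)] card_path_inter_min_cut[OF assms]] .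
  then have "cut_pos p X < length p \<and> p ! cut_pos p X \<in> X"
    unfolding cut_pos_def by (rule theI')
  then show "cut_pos p X < length p" and "j < length p \<Longrightarrow> p ! j \<in> X \<longleftrightarrow> j = cut_pos p X"
    using ex1 by blast+
qed

lemma cut_pos_mono:
  assumes X: "X \<in> min_cuts G s t" and Y: "Y \<in> min_cuts G s t" and "cut_le G s t X Y" and p: "p \<in> P"
  shows "cut_pos p X \<le> cut_pos p Y"
proof -
  obtain i where "i < length p" "p ! i \<in> X" and before: "\<forall>j<i. p ! j \<notin> Y"
    using assms(3) apath_P[OF p] by (auto simp: cut_le_def)
  then have "i = cut_pos p X"
    using nth_in_min_cut_iff[OF X p] by blast
  then show ?thesis
    using before nth_in_min_cut_iff[OF Y p] cut_pos_less_length[OF Y p] not_le by blast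
qed

lemma
  assumes X: "X \<in> min_cuts G s t" and Y: "Y \<in> min_cuts G s t" and p: "p \<in> P"
  shows hd_filter_union_min_cuts:
      "hd (filter (\<lambda>a. a \<in> X \<union> Y) p) = p ! min (cut_pos p X) (cut_pos p Y)"
    and last_filter_union_min_cuts:
      "last (filter (\<lambda>a. a \<in> X \<union> Y) p) = p ! max (cut_pos p X) (cut_pos p Y)"
proof -
  have iff: "j < length p \<Longrightarrow> p ! j \<in> X \<union> Y \<longleftrightarrow> j = cut_pos p X \<or> j = cut_pos p Y" for j
    using nth_in_min_cut_iff[OF X p] nth_in_min_cut_iff[OF Y p] by blast
  note less = cut_pos_less_length[OF X p] cut_pos_less_length[OF Y p]
  show "hd (filter (\<lambda>a. a \<in> X \<union> Y) p) = p ! min (cut_pos p X) (cut_pos p Y)"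
  proof (rule hd_filter_eq_nth)
    show "min (cut_pos p X) (cut_pos p Y) < length p" "p ! min (cut_pos p X) (cut_pos p Y) \<in> X \<union> Y"
      using iff less by (auto simp: min_def)
    fix i assume "i < min (cut_pos p X) (cut_pos p Y)"
    then show "p ! i \<notin> X \<union> Y"
      using iff[of i] less by auto
  qed
  show "last (filter (\<lambda>a. a \<in> X \<union> Y) p) = p ! max (cut_pos p X) (cut_pos p Y)"
  proof (rule last_filter_eq_nth)
    show "max (cut_pos p X) (cut_pos p Y) < length p" "p ! max (cut_pos p X) (cut_pos p Y) \<in> X \<union> Y"
      using iff less by (auto simp: max_def)
    fix i assume "max (cut_pos p X) (cut_pos p Y) < i" "i < length p"
    then show "p ! i \<notin> X \<union> Y"
      using iff[of i] by auto
  qed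
qed

lemma
  assumes X: "X \<in> min_cuts G s t" and Y: "Y \<in> min_cuts G s t"
  shows S_min_union_min_cuts:
      "S_min P (X \<union> Y) = {p ! min (cut_pos p X) (cut_pos p Y) | p. p \<in> P}"
    and S_max_union_min_cuts:
      "S_max P (X \<union> Y) = {p ! max (cut_pos p X) (cut_pos p Y) | p. p \<in> P}"
  using hd_filter_union_min_cuts[OF X Y] last_filter_union_min_cuts[OF X Y]
  unfolding S_min_def S_max_def by (metis (no_types, lifting))+

lemma
  assumes X: "X \<in> min_cuts G s t" and Y: "Y \<in> min_cuts G s t" and p: "p \<in> P" and n: "n < length p"
  shows nth_in_S_min_union_min_cuts_iff: "p ! n \<in> S_min P (X \<union> Y) \<longleftrightarrow> min (cut_pos p X) (cut_pos p Y) = n"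
    and nth_in_S_max_union_min_cuts_iff: "p ! n \<in> S_max P (X \<union> Y) \<longleftrightarrow> max (cut_pos p X) (cut_pos p Y) = n"
  unfolding S_min_union_min_cuts[OF X Y] S_max_union_min_cuts[OF X Y]
  by (rule nth_in_nth_P_image_iff[OF _ p n],
      simp add: cut_pos_less_length[OF X] cut_pos_less_length[OF Y] min_less_iff_disj less_max_iff_disj)+

lemma S_min_S_max_union_min_cuts_subset:
  assumes X: "X \<in> min_cuts G s t" and Y: "Y \<in> min_cuts G s t"
  shows "S_min P (X \<union> Y) \<subseteq> path_arcs" and "S_max P (X \<union> Y) \<subseteq> path_arcs"
  using cut_pos_less_length[OF X] cut_pos_less_length[OF Y]
  unfolding S_min_union_min_cuts[OF X Y] S_max_union_min_cuts[OF X Y] path_arcs_def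
  by (auto simp: min_def max_def)

lemma mono_on_cut_pos_U_lr:
  assumes C: "C \<in> U_lr G s t k" and p: "p \<in> P"
  shows "mono_on {..<k} (\<lambda>i. cut_pos p (C ! i))"
proof (rule mono_onI)
  fix i j assume "i \<in> {..<k}" "j \<in> {..<k}" "i \<le> j"
  then show "cut_pos p (C ! i) \<le> cut_pos p (C ! j)"
    using C cut_pos_mono[OF U_lr_nth_in_min_cuts[OF C] U_lr_nth_in_min_cuts[OF C] _ p]
    by (cases "i = j") (auto simp: U_lr_def)
qed

lemma
  assumes C: "C \<in> U_lr G s t k" and D: "D \<in> U_lr G s t k" and p: "p \<in> P" and n: "n < length p"
  shows mu_nth_U_lr: "mu (p ! n) C = card {i\<in>{..<k}. cut_pos p (C ! i) = n}"
    and mu_nth_L_join: "mu (p ! n) (L_join P C D) =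
      card {i\<in>{..<k}. max (cut_pos p (C ! i)) (cut_pos p (D ! i)) = n}"
    and mu_nth_L_meet: "mu (p ! n) (L_meet P C D) =
      card {i\<in>{..<k}. min (cut_pos p (C ! i)) (cut_pos p (D ! i)) = n}"
proof -
  have len: "length C = k" "length D = k"
    using C D by (simp_all add: U_lr_def)
  note cuts = U_lr_nth_in_min_cuts[OF C] U_lr_nth_in_min_cuts[OF D]
  show "mu (p ! n) C = card {i\<in>{..<k}. cut_pos p (C ! i) = n}"
    unfolding mu_def len
    by (intro arg_cong[where f = card]) (use nth_in_min_cut_iff[OF cuts(1) p n] in auto)
  show "mu (p ! n) (L_join P C D) = card {i\<in>{..<k}. max (cut_pos p (C ! i)) (cut_pos p (D ! i)) = n}"
    unfolding mu_L_join[OF len]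
    by (intro arg_cong[where f = card]) (use nth_in_S_max_union_min_cuts_iff[OF cuts p n] in auto)
  show "mu (p ! n) (L_meet P C D) = card {i\<in>{..<k}. min (cut_pos p (C ! i)) (cut_pos p (D ! i)) = n}"
    unfolding mu_L_meet[OF len]
    by (intro arg_cong[where f = card]) (use nth_in_S_min_union_min_cuts_iff[OF cuts p n] in auto)
qed

lemma B_L_join_L_meet_le_on_path:
  assumes C: "C \<in> U_lr G s t k" and D: "D \<in> U_lr G s t k" and p: "p \<in> P" and n: "n < length p"
  shows "B (p ! n) (L_join P C D) + B (p ! n) (L_meet P C D) \<le> B (p ! n) C + B (p ! n) D"
  unfolding B_def mu_nth_L_join[OF assms] mu_nth_L_meet[OF assms]
    mu_nth_U_lr[OF C D p n] mu_nth_U_lr[OF D C p n]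
  by (rule choose_two_max_min_level_sets_le[OF finite_lessThan
        mono_on_cut_pos_U_lr[OF C p] mono_on_cut_pos_U_lr[OF D p]])

lemma B_L_join_L_meet_off_paths:
  assumes C: "C \<in> U_lr G s t k" and D: "D \<in> U_lr G s t k" and e: "e \<notin> path_arcs"
  shows "B e (L_join P C D) = 0" and "B e (L_meet P C D) = 0"
proof -
  have len: "length C = k" "length D = k"
    using C D by (simp_all add: U_lr_def)
  note subset = S_min_S_max_union_min_cuts_subset[OF U_lr_nth_in_min_cuts[OF C] U_lr_nth_in_min_cuts[OF D]]
  have empty: "{i\<in>{..<k}. e \<in> S_max P (C ! i \<union> D ! i)} = {}"
    "{i\<in>{..<k}. e \<in> S_min P (C ! i \<union> D ! i)} = {}"
    using subset e by blast+
  show "B e (L_join P C D) = 0" "B e (L_meet P C D) = 0"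
    unfolding B_def mu_L_join[OF len] mu_L_meet[OF len] empty by simp_all
qed

end

theorem claim1:
  fixes G :: "('a,'b) pre_digraph" and s t :: 'a and k :: nat
    and P :: "'b list set" and C1 C2 :: "'b set list" and e :: 'b
  assumes "fin_digraph G"
    and "s \<in> verts G" and "t \<in> verts G"
    and "k \<ge> 1"
    and "max_disjoint_paths G s t P"
    and "C1 \<in> U_lr G s t k" and "C2 \<in> U_lr G s t k"
    and "e \<in> arcs G"
  shows "B e (L_join P C1 C2) + B e (L_meet P C1 C2) \<le> B e C1 + B e C2"
proof -
  interpret fin_digraph G by fact
  have "C1 ! 0 \<in> min_cuts G s t"
    using U_lr_nth_in_min_cuts[OF assms(6)] assms(4) by simp
  then have "s \<noteq> t"
    using no_st_cut_self[OF assms(2)] by (auto simp: min_cuts_def)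
  then interpret st_max_paths G s t P
    using assms(2,5) by unfold_locales
  show ?thesis
  proof (cases "e \<in> path_arcs")
    case True
    then obtain p n where "p \<in> P" "n < length p" "e = p ! n"
      by (auto simp: path_arcs_def in_set_conv_nth)
    then show ?thesis
      using B_L_join_L_meet_le_on_path assms(6,7) by blast
  next
    case False
    then show ?thesis
      using B_L_join_L_meet_off_paths assms(6,7) by simp
  qed
qed

end
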